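(* Fix $\epsilon\in[0,1/3)$ and $\zeta\in(0,1)$, and suppose the local identification assumption holds. Let $\hat\theta\in\Theta$ be the estimator returned by the numerical optimizer. Suppose there is an event $E$ of probability at least $1-\zeta$ on which: (i) for every $k\in[L]$ and every $\theta\in\mathcal B_0$, $$\Big\|\sum_{n=1}^N\hat w^{(k)}_n(\theta)\check g^{(k)}_n(\theta)-\mu^{(k)}_g(\theta)\Big\|_2\le\delta_{\mu,k}(\zeta)+\alpha_\epsilon\sqrt{C_k},\qquad\alpha_\epsilon=\sqrt{\tfrac{\epsilon}{1-2\epsilon}}$$ (as guaranteed, under high-probability inlier stability, by the SGR reweighting with $C_k=C_{stop,k}$ or $C_k=\sup_{\theta\in\mathcal B_0}\|\Sigma^{(k)}_g(\theta)\|_{op}+\delta_{\Sigma,k}(\zeta)+(\delta_{\mu,k}(\zeta)+R_k)^2+\delta_{T,k}$); and (ii) $\hat\theta\in\mathcal B_0$ and $\|\hat\Psi^{SGR}(\hat\theta)\|_2\le\delta_{opt}$. Then on $E$ (hence with probability at least $1-\zeta$), $$\|\hat\theta-\theta^\star\|_2\le\frac{2}{\lambda^\star}\Big(\sum_{k=1}^La_k\big(\delta_{\mu,k}(\zeta)+\alpha_\epsilon\sqrt{C_k}\big)+\delta_{opt}\Big).$$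
   Context: Let $\Theta\subseteq\mathbb R^p$, $\theta^\star\in\Theta$, $L\ge1$, population moment blocks $m_k:\Theta\to\mathbb R^{q_k}$, $m=(m_1,\dots,m_L):\Theta\to\mathbb R^q$, Jacobian $G(\theta)=\nabla_\theta m(\theta)\in\mathbb R^{q\times p}$, $W\in\mathbb R^{q\times q}$ symmetric PSD, and population GMM score $\Psi(\theta)=G(\theta)^\top Wm(\theta)$. Local identification assumption: there is $r_0>0$ with $\mathcal B_0=\{\theta:\|\theta-\theta^\star\|_2\le r_0\}\subseteq\Theta$ and (i) $m(\theta^\star)=0$; (ii) $m$ is $C^1$ on $\mathcal B_0$ with $\|G(\theta)-G(\theta')\|_{op}\le L_G\|\theta-\theta'\|_2$ on $\mathcal B_0$; (iii) $\lambda^\star=\lambda_{\min}((G^\star)^\top WG^\star)>0$ where $G^\star=G(\theta^\star)$; (iv) $\|W\|_{op}L_Gr_0(\frac32\|G^\star\|_{op}+\frac12L_Gr_0)\le\lambda^\star/2$. For each $k\in[L]$, $n\in[N]$ and $\theta$, $\check g^{(k)}_n(\theta)\in\mathbb R^p$ is the per-observation gradient of the order-$k$ moment-matching objective evaluated at the (possibly $\epsilon$-contaminated) $n$-th observation, with inlier population mean $\mu^{(k)}_g(\theta)\in\mathbb R^p$; $a_1,\dots,a_L\ge0$ are scalars with $\Psi(\theta)=\sum_{k=1}^La_k\mu^{(k)}_g(\theta)$ for $\theta\in\mathcal B_0$. The capped simplex is $\Delta_{N,\epsilon}=\{w\in\mathbb R^N:\sum_nw_n=1,0\le w_n\le\frac1{(1-\epsilon)N}\}$;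 $\hat w^{(k)}(\theta)\in\Delta_{N,\epsilon}$ are the reweighting weights computed on the cloud $\{\check g^{(k)}_n(\theta)\}_n$, and $\hat\Psi^{SGR}(\theta)=\sum_{k=1}^La_k\sum_{n=1}^N\hat w^{(k)}_n(\theta)\check g^{(k)}_n(\theta)$. The constants $\delta_{\mu,k}(\zeta),C_k,\delta_{opt}\ge0$ are given. *)

theory Defs
  imports "HOL-Analysis.Analysis" "HOL-Probability.Probability"
begin

text \<open>Smallest eigenvalue of a square real matrix (used for symmetric PSD matrices,
  whose eigenvalues are real).\<close>
definition lambda_min :: "real^'n^'n \<Rightarrow> real" where
  "lambda_min A = Min {c. \<exists>v::real^'n. v \<noteq> 0 \<and> A *v v = c *\<^sub>R v}"

definition opnorm :: "real^'n^'m \<Rightarrow> real" where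
  "opnorm A = onorm (\<lambda>x. A *v x)"

definition capped_simplex :: "nat \<Rightarrow> real \<Rightarrow> (nat \<Rightarrow> real) set" where
  "capped_simplex N eps = {w. (\<Sum>n=1..N. w n) = 1 \<and>
      (\<forall>n\<in>{1..N}. 0 \<le> w n \<and> w n \<le> 1 / ((1 - eps) * real N))}"

end

theory Submission
  imports Defs
begin

text \<open>Near \<theta>*, the population score \<Psi>(\<theta>) = G(\<theta>)' W m(\<theta>) behaves like its linearization
  G(\<theta>*)' W G(\<theta>*) (\<theta> - \<theta>*). Lipschitz continuity of the Jacobian bounds both the Taylor
  remainder of m and the change of G by O(LG r0 |\<theta> - \<theta>*|), and the local identification
  condition keeps the resulting cross terms below half the curvature \<lambda>*, so that
  (\<theta> - \<theta>*) \<bullet> \<Psi>(\<theta>) \<ge> \<lambda>*/2 |\<theta> - \<theta>*|^2 and hence |\<theta> - \<theta>*| \<le> 2/\<lambda>* |\<Psi>(\<theta>)| on B0.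
  On the event E the reweighted score differs from \<Psi> by at most \<Sum>k a_k (\<delta>_\<mu>,k + \<alpha> sqrt C_k)
  and is at most \<delta>_opt at the estimate, which bounds |\<Psi>| there.\<close>

lemma inner_transpose_mult_vector:
  fixes B :: "real^'n^'m"
  shows "x \<bullet> (transpose B *v y) = (B *v x) \<bullet> y"
  by (metis dot_lmul_matrix inner_commute vector_transpose_matrix)

lemma inner_symmetric_mult_vector:
  fixes A :: "real^'n^'n"
  assumes "transpose A = A"
  shows "x \<bullet> (A *v y) = (A *v x) \<bullet> y"
  by (metis assms inner_transpose_mult_vector)

lemma finite_eigenvalues_symmetric:
  fixes A :: "real^'n^'n"
  assumes sym: "transpose A = A"
  shows "finite {c. \<exists>v. v \<noteq> 0 \<and> A *v v = c *\<^sub>R v}"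
proof -
  define S where "S = {c. \<exists>v. v \<noteq> 0 \<and> A *v v = c *\<^sub>R v}"
  define ev where "ev c = (SOME v. v \<noteq> 0 \<and> A *v v = c *\<^sub>R v)" for c
  have ev: "ev c \<noteq> 0" "A *v ev c = c *\<^sub>R ev c" if "c \<in> S" for c
    using someI_ex[OF that[unfolded S_def, simplified]] unfolding ev_def by auto
  have orth: "ev c \<bullet> ev d = 0" if "c \<in> S" "d \<in> S" "c \<noteq> d" for c d
  proof -
    have "d * (ev c \<bullet> ev d) = c * (ev c \<bullet> ev d)"
      using inner_symmetric_mult_vector[OF sym, of "ev c" "ev d"] ev[OF that(1)] ev[OF that(2)]
      by simp
    with \<open>c \<noteq> d\<close> show ?thesis by simp
  qed
  have "inj_on ev S"
  proof (rule inj_onI)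
    fix c d assume "c \<in> S" "d \<in> S" "ev c = ev d"
    then show "c = d" using orth ev(1) by force
  qed
  moreover have "pairwise orthogonal (ev ` S)"
    unfolding pairwise_def orthogonal_def using orth by blast
  then have "finite (ev ` S)"
    using ev(1) by (metis imageE pairwise_orthogonal_independent independent_imp_finite)
  ultimately show ?thesis unfolding S_def[symmetric] by (rule finite_imageD[rotated])
qed

lemma nonneg_quadratic_imp_linear_coeff_zero:
  fixes b c :: real
  assumes "\<And>t. 0 \<le> b * t + c * t^2"
  shows "b = 0"
proof (rule ccontr)
  assume "b \<noteq> 0"
  define s where "s = 1 / (2 * (\<bar>c\<bar> + 1))"
  have s: "0 < s" "c * s < 1" unfolding s_def by (auto simp: field_simps abs_if)
  have "b * (- b * s) + c * (- b * s)^2 = - (b^2 * s * (1 - c * s))"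
    by (simp add: power2_eq_square algebra_simps)
  also have "\<dots> < 0" using \<open>b \<noteq> 0\<close> s by simp
  finally show False using assms[of "- b * s"] by linarith
qed

lemma rayleigh_minimum_attained:
  fixes A :: "real^'n^'n"
  obtains v where "norm v = 1" "\<And>y. (v \<bullet> (A *v v)) * (y \<bullet> y) \<le> y \<bullet> (A *v y)"
proof -
  define f where "f y = y \<bullet> (A *v y)" for y :: "real^'n"
  have "continuous_on UNIV f"
    unfolding f_def by (intro continuous_intros linear_continuous_on matrix_vector_mul_bounded_linear)
  then have "continuous_on (sphere 0 1) f"
    by (rule continuous_on_subset) simp
  moreover have "sphere (0::real^'n) 1 \<noteq> {}"
    using norm_axis_1[of undefined] by (metis mem_sphere_0 empty_iff)
  ultimately obtain v where v: "v \<in> sphere 0 1" and min: "\<And>u. u \<in> sphere 0 1 \<Longrightarrow> f v \<le> f u"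
    using continuous_attains_inf[OF compact_sphere] by blast
  have "f v * (y \<bullet> y) \<le> f y" for y
  proof (cases "y = 0")
    case False
    have "f v \<le> f (y /\<^sub>R norm y)" using False by (intro min) simp
    also have "\<dots> = f y / (y \<bullet> y)"
      by (simp add: f_def matrix_vector_mult_scaleR dot_square_norm power2_eq_square divide_inverse)
    finally show ?thesis using False by (simp add: field_simps)
  qed (simp add: f_def)
  with v that show ?thesis by (simp add: f_def)
qed

lemma rayleigh_minimizer_eigenvector:
  fixes A :: "real^'n^'n"
  assumes sym: "transpose A = A"
    and min: "\<And>y. \<mu> * (y \<bullet> y) \<le> y \<bullet> (A *v y)"
    and v: "v \<bullet> (A *v v) = \<mu> * (v \<bullet> v)"
  shows "A *v v = \<mu> *\<^sub>R v"
proof -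
  define w where "w = A *v v - \<mu> *\<^sub>R v"
  \<comment> \<open>The form y \<mapsto> y \<bullet> A y - \<mu> y \<bullet> y is nonnegative and vanishes at v, so its slope 2 w \<bullet> w
     at v in direction w must vanish.\<close>
  have "0 \<le> 2 * (w \<bullet> w) * t + (w \<bullet> (A *v w) - \<mu> * (w \<bullet> w)) * t^2" for t
  proof -
    have "0 \<le> (v + t *\<^sub>R w) \<bullet> (A *v (v + t *\<^sub>R w)) - \<mu> * ((v + t *\<^sub>R w) \<bullet> (v + t *\<^sub>R w))"
      using min by simp
    also have "\<dots> = 2 * (w \<bullet> w) * t + (w \<bullet> (A *v w) - \<mu> * (w \<bullet> w)) * t^2"
      using v inner_symmetric_mult_vector[OF sym, of v w]
      by (simp add: w_def inner_commute power2_eq_square algebra_simps)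
    finally show ?thesis .
  qed
  then have "2 * (w \<bullet> w) = 0" by (rule nonneg_quadratic_imp_linear_coeff_zero)
  then show ?thesis by (simp add: w_def)
qed

lemma lambda_min_le_quadratic_form:
  fixes A :: "real^'n^'n"
  assumes sym: "transpose A = A"
  shows "lambda_min A * (x \<bullet> x) \<le> x \<bullet> (A *v x)"
proof -
  obtain v where v: "norm v = 1" and min: "\<And>y. (v \<bullet> (A *v v)) * (y \<bullet> y) \<le> y \<bullet> (A *v y)"
    using rayleigh_minimum_attained[of A] by blast
  define \<mu> where "\<mu> = v \<bullet> (A *v v)"
  have "v \<bullet> v = 1" using v by (simp add: dot_square_norm)
  then have "A *v v = \<mu> *\<^sub>R v"
    using min by (intro rayleigh_minimizer_eigenvector[OF sym]) (simp_all add: \<mu>_def)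
  with v have "lambda_min A \<le> \<mu>"
    unfolding lambda_min_def
    by (intro Min_le finite_eigenvalues_symmetric[OF sym]) (auto intro!: exI[of _ v])
  then have "lambda_min A * (x \<bullet> x) \<le> \<mu> * (x \<bullet> x)" by (simp add: mult_right_mono)
  also have "\<dots> \<le> x \<bullet> (A *v x)" using min by (simp add: \<mu>_def)
  finally show ?thesis .
qed

lemma opnorm_mult_vector_le:
  fixes A :: "real^'n^'m"
  shows "norm (A *v x) \<le> opnorm A * norm x"
  unfolding opnorm_def by (rule onorm[OF matrix_vector_mul_bounded_linear])

lemma opnorm_nonneg:
  fixes A :: "real^'n^'m"
  shows "0 \<le> opnorm A"
  unfolding opnorm_def by (rule onorm_pos_le[OF matrix_vector_mul_bounded_linear])

lemma linearization_remainder_le: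
  fixes f :: "real^'n \<Rightarrow> real^'m" and G :: "real^'n \<Rightarrow> real^'n^'m"
  assumes S: "convex S" "x \<in> S" "y \<in> S"
    and deriv: "\<And>z. z \<in> S \<Longrightarrow> (f has_derivative (\<lambda>h. G z *v h)) (at z within S)"
    and lip: "\<And>z. z \<in> S \<Longrightarrow> opnorm (G z - G x) \<le> K * norm (z - x)"
  shows "norm (f y - f x - G x *v (y - x)) \<le> K / 2 * (norm (y - x))^2"
proof -
  define h where "h = y - x"
  define p where "p t = x + t *\<^sub>R h" for t :: real
  define g where "g t = f (p t) - t *\<^sub>R (G x *v h)" for t
  have pS: "p ` {0..1} \<subseteq> S"
    using convexD_alt[OF S] by (auto simp: p_def h_def algebra_simps)
  have p_deriv: "(p has_derivative (\<lambda>s. s *\<^sub>R h)) (at t within {0..1})" for t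
    unfolding p_def by (auto intro!: derivative_eq_intros)
  have g_deriv: "(g has_derivative (\<lambda>s. s *\<^sub>R ((G (p t) - G x) *v h))) (at t within {0..1})"
    if "t \<in> {0..1}" for t
  proof -
    have "((\<lambda>t. f (p t)) has_derivative (\<lambda>s. G (p t) *v (s *\<^sub>R h))) (at t within {0..1})"
      by (rule has_derivative_in_compose2[of S f "\<lambda>z h. G z *v h", OF deriv pS that p_deriv])
    then have "(g has_derivative (\<lambda>s. G (p t) *v (s *\<^sub>R h) - s *\<^sub>R (G x *v h))) (at t within {0..1})"
      unfolding g_def by (intro derivative_intros)
    moreover have "(\<lambda>s. G (p t) *v (s *\<^sub>R h) - s *\<^sub>R (G x *v h)) = (\<lambda>s. s *\<^sub>R ((G (p t) - G x) *v h))"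
      by (simp add: matrix_vector_mult_scaleR matrix_vector_mult_diff_rdistrib scaleR_diff_right)
    ultimately show ?thesis by simp
  qed
  have "continuous_on {0..1} g"
    by (rule has_derivative_continuous_on[OF g_deriv])
  moreover have "(g has_vector_derivative (G (p t) - G x) *v h) (at t)" if "0 < t" "t < 1" for t
    using g_deriv[of t] that
    by (simp add: has_vector_derivative_def at_within_Icc_at)
  moreover have "((\<lambda>t. K * (norm h)^2 * t^2 / 2) has_vector_derivative K * (norm h)^2 * t) (at t)"
    for t
    by (auto simp: has_vector_derivative_def intro!: derivative_eq_intros)
  moreover have "norm ((G (p t) - G x) *v h) \<le> K * (norm h)^2 * t" if "0 < t" "t < 1" for t
  proof -
    have "norm ((G (p t) - G x) *v h) \<le> opnorm (G (p t) - G x) * norm h"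
      by (rule opnorm_mult_vector_le)
    also have "\<dots> \<le> K * norm (p t - x) * norm h"
      using lip[of "p t"] pS that by (intro mult_right_mono) (auto simp: image_subset_iff)
    also have "\<dots> = K * (norm h)^2 * t"
      using that by (simp add: p_def power2_eq_square)
    finally show ?thesis .
  qed
  ultimately have "norm (g 1 - g 0) \<le> K * (norm h)^2 * 1^2 / 2 - K * (norm h)^2 * 0^2 / 2"
    by (intro differentiable_bound_general[OF zero_less_one]) (auto intro!: continuous_intros)
  moreover have "g 1 - g 0 = f y - f x - G x *v h"
    by (simp add: g_def p_def h_def)
  ultimately show ?thesis by (simp add: h_def)
qed

lemma inner_perturbed_form_le:
  fixes W :: "real^'n^'n"
  assumes "norm u \<le> a" "norm d \<le> b" "norm r \<le> c"
  shows "\<bar>(u + d) \<bullet> (W *v (u + r)) - u \<bullet> (W *v u)\<bar> \<le> opnorm W * (a * c + b * a + b * c)"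
proof -
  have form_le: "\<bar>x \<bullet> (W *v z)\<bar> \<le> opnorm W * (s * t)" if "norm x \<le> s" "norm z \<le> t" for x z s t
  proof -
    have Wz: "norm (W *v z) \<le> opnorm W * t"
      using opnorm_mult_vector_le[of W z] mult_left_mono[OF that(2) opnorm_nonneg[of W]] by linarith
    have "\<bar>x \<bullet> (W *v z)\<bar> \<le> norm x * norm (W *v z)"
      by (rule Cauchy_Schwarz_ineq2)
    also have "\<dots> \<le> s * (opnorm W * t)"
      by (rule mult_mono[OF that(1) Wz order.trans[OF norm_ge_zero that(1)] norm_ge_zero])
    finally show ?thesis by (simp add: algebra_simps)
  qed
  have "\<bar>(u + d) \<bullet> (W *v (u + r)) - u \<bullet> (W *v u)\<bar>
      = \<bar>u \<bullet> (W *v r) + d \<bullet> (W *v u) + d \<bullet> (W *v r)\<bar>"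
    by (simp add: matrix_vector_right_distrib inner_add_left inner_add_right)
  also have "\<dots> \<le> \<bar>u \<bullet> (W *v r)\<bar> + \<bar>d \<bullet> (W *v u)\<bar> + \<bar>d \<bullet> (W *v r)\<bar>"
    by linarith
  also have "\<dots> \<le> opnorm W * (a * c) + opnorm W * (b * a) + opnorm W * (b * c)"
    by (intro add_mono form_le assms)
  finally show ?thesis by (simp add: distrib_left)
qed

lemma lambda_min_gram_le:
  fixes M :: "real^'p^'q" and W :: "real^'q^'q"
  assumes "transpose W = W"
  shows "lambda_min (transpose M ** W ** M) * (norm h)^2 \<le> (M *v h) \<bullet> (W *v (M *v h))"
proof -
  have "transpose (transpose M ** W ** M) = transpose M ** W ** M"
    by (simp add: matrix_transpose_mul assms matrix_mul_assoc)
  from lambda_min_le_quadratic_form[OF this, of h]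
  show ?thesis
    unfolding dot_square_norm matrix_vector_mul_assoc[symmetric] inner_transpose_mult_vector .
qed

lemma lipschitz_jacobian_errors_le:
  fixes m :: "real^'p \<Rightarrow> real^'q" and G :: "real^'p \<Rightarrow> real^'p^'q"
  assumes m_deriv: "\<And>\<theta>. \<theta> \<in> cball \<theta>\<^sub>0 r \<Longrightarrow> (m has_derivative (\<lambda>h. G \<theta> *v h)) (at \<theta> within cball \<theta>\<^sub>0 r)"
    and G_lip: "\<And>\<theta> \<theta>'. \<theta> \<in> cball \<theta>\<^sub>0 r \<Longrightarrow> \<theta>' \<in> cball \<theta>\<^sub>0 r \<Longrightarrow> opnorm (G \<theta> - G \<theta>') \<le> K * norm (\<theta> - \<theta>')"
    and m_zero: "m \<theta>\<^sub>0 = 0" and \<theta>: "\<theta> \<in> cball \<theta>\<^sub>0 r" and "0 \<le> K"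
  shows "norm (m \<theta> - G \<theta>\<^sub>0 *v (\<theta> - \<theta>\<^sub>0)) \<le> K / 2 * r * norm (\<theta> - \<theta>\<^sub>0)"
    and "norm ((G \<theta> - G \<theta>\<^sub>0) *v (\<theta> - \<theta>\<^sub>0)) \<le> K * r * norm (\<theta> - \<theta>\<^sub>0)"
proof -
  define n where "n = norm (\<theta> - \<theta>\<^sub>0)"
  have n: "0 \<le> n" "n \<le> r"
    using \<theta> by (simp_all add: n_def dist_norm norm_minus_commute)
  have \<theta>\<^sub>0: "\<theta>\<^sub>0 \<in> cball \<theta>\<^sub>0 r" using n by simp
  have Kn: "K * n * n \<le> K * r * n"
    using n \<open>0 \<le> K\<close> by (intro mult_right_mono mult_left_mono) auto
  have "norm (m \<theta> - G \<theta>\<^sub>0 *v (\<theta> - \<theta>\<^sub>0)) \<le> K / 2 * n^2"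
    using linearization_remainder_le[OF convex_cball \<theta>\<^sub>0 \<theta> m_deriv G_lip[OF _ \<theta>\<^sub>0]]
    by (simp add: n_def m_zero)
  with Kn show "norm (m \<theta> - G \<theta>\<^sub>0 *v (\<theta> - \<theta>\<^sub>0)) \<le> K / 2 * r * n"
    by (simp add: power2_eq_square)
  have "norm ((G \<theta> - G \<theta>\<^sub>0) *v (\<theta> - \<theta>\<^sub>0)) \<le> opnorm (G \<theta> - G \<theta>\<^sub>0) * n"
    unfolding n_def by (rule opnorm_mult_vector_le)
  also have "\<dots> \<le> K * n * n"
    using G_lip[OF \<theta> \<theta>\<^sub>0] n by (simp add: n_def mult_right_mono)
  finally show "norm ((G \<theta> - G \<theta>\<^sub>0) *v (\<theta> - \<theta>\<^sub>0)) \<le> K * r * n"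
    using Kn by linarith
qed

lemma gmm_score_inner_lower_bound:
  fixes m :: "real^'p \<Rightarrow> real^'q" and G :: "real^'p \<Rightarrow> real^'p^'q" and W :: "real^'q^'q"
    and \<theta>\<^sub>0 :: "real^'p"
  defines "lam \<equiv> lambda_min (transpose (G \<theta>\<^sub>0) ** W ** G \<theta>\<^sub>0)"
  assumes W_sym: "transpose W = W"
    and m_zero: "m \<theta>\<^sub>0 = 0"
    and m_deriv: "\<And>\<theta>. \<theta> \<in> cball \<theta>\<^sub>0 r \<Longrightarrow> (m has_derivative (\<lambda>h. G \<theta> *v h)) (at \<theta> within cball \<theta>\<^sub>0 r)"
    and G_lip: "\<And>\<theta> \<theta>'. \<theta> \<in> cball \<theta>\<^sub>0 r \<Longrightarrow> \<theta>' \<in> cball \<theta>\<^sub>0 r \<Longrightarrow> opnorm (G \<theta> - G \<theta>') \<le> K * norm (\<theta> - \<theta>')"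
    and ident: "opnorm W * K * r * (3/2 * opnorm (G \<theta>\<^sub>0) + 1/2 * K * r) \<le> lam / 2"
    and \<theta>: "\<theta> \<in> cball \<theta>\<^sub>0 r"
  shows "lam / 2 * (norm (\<theta> - \<theta>\<^sub>0))^2 \<le> (\<theta> - \<theta>\<^sub>0) \<bullet> (transpose (G \<theta>) *v (W *v m \<theta>))"
proof (cases "\<theta> = \<theta>\<^sub>0")
  case False
  define h where "h = \<theta> - \<theta>\<^sub>0"
  define n where "n = norm h"
  define u where "u = G \<theta>\<^sub>0 *v h"
  define d where "d = (G \<theta> - G \<theta>\<^sub>0) *v h"
  define e where "e = m \<theta> - u"
  have "\<theta>\<^sub>0 \<in> cball \<theta>\<^sub>0 r"
    using \<theta> zero_le_dist[of \<theta>\<^sub>0 \<theta>] unfolding mem_cball dist_self by linarith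
  have "0 \<le> opnorm (G \<theta> - G \<theta>\<^sub>0)" by (rule opnorm_nonneg)
  also have "\<dots> \<le> K * n"
    using G_lip[OF \<theta> \<open>\<theta>\<^sub>0 \<in> cball \<theta>\<^sub>0 r\<close>] by (simp add: n_def h_def)
  finally have "0 \<le> K"
    using False by (simp add: n_def h_def zero_le_mult_iff)
  note errors = lipschitz_jacobian_errors_le[OF m_deriv G_lip m_zero \<theta> this]
  have "\<bar>(u + d) \<bullet> (W *v (u + e)) - u \<bullet> (W *v u)\<bar>
      \<le> opnorm W * (opnorm (G \<theta>\<^sub>0) * n * (K / 2 * r * n) + K * r * n * (opnorm (G \<theta>\<^sub>0) * n)
                      + K * r * n * (K / 2 * r * n))"
    using errors unfolding u_def d_def e_def n_def h_def
    by (intro inner_perturbed_form_le opnorm_mult_vector_le)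
  also have "\<dots> = opnorm W * K * r * (3/2 * opnorm (G \<theta>\<^sub>0) + 1/2 * K * r) * n^2"
    by (simp add: power2_eq_square algebra_simps)
  also have "\<dots> \<le> lam / 2 * n^2"
    using ident by (intro mult_right_mono) auto
  finally have "\<bar>(u + d) \<bullet> (W *v (u + e)) - u \<bullet> (W *v u)\<bar> \<le> lam / 2 * n^2" .
  moreover have "lam * n^2 \<le> u \<bullet> (W *v u)"
    unfolding lam_def n_def u_def by (rule lambda_min_gram_le[OF W_sym])
  moreover have "h \<bullet> (transpose (G \<theta>) *v (W *v m \<theta>)) = (G \<theta> *v h) \<bullet> (W *v m \<theta>)"
    by (rule inner_transpose_mult_vector)
  moreover have "\<dots> = (u + d) \<bullet> (W *v (u + e))"
    by (simp add: u_def d_def e_def matrix_vector_mult_diff_rdistrib)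
  ultimately show ?thesis
    unfolding n_def h_def by linarith
qed simp

lemma gmm_score_coercive:
  fixes m :: "real^'p \<Rightarrow> real^'q" and G :: "real^'p \<Rightarrow> real^'p^'q" and W :: "real^'q^'q"
    and \<theta>\<^sub>0 :: "real^'p"
  defines "lam \<equiv> lambda_min (transpose (G \<theta>\<^sub>0) ** W ** G \<theta>\<^sub>0)"
  assumes W_sym: "transpose W = W"
    and m_zero: "m \<theta>\<^sub>0 = 0"
    and m_deriv: "\<And>\<theta>. \<theta> \<in> cball \<theta>\<^sub>0 r \<Longrightarrow> (m has_derivative (\<lambda>h. G \<theta> *v h)) (at \<theta> within cball \<theta>\<^sub>0 r)"
    and G_lip: "\<And>\<theta> \<theta>'. \<theta> \<in> cball \<theta>\<^sub>0 r \<Longrightarrow> \<theta>' \<in> cball \<theta>\<^sub>0 r \<Longrightarrow> opnorm (G \<theta> - G \<theta>') \<le> K * norm (\<theta> - \<theta>')"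
    and ident: "opnorm W * K * r * (3/2 * opnorm (G \<theta>\<^sub>0) + 1/2 * K * r) \<le> lam / 2"
    and \<theta>: "\<theta> \<in> cball \<theta>\<^sub>0 r"
  shows "lam / 2 * norm (\<theta> - \<theta>\<^sub>0) \<le> norm (transpose (G \<theta>) *v (W *v m \<theta>))"
proof (cases "\<theta> = \<theta>\<^sub>0")
  case False
  let ?\<Psi> = "transpose (G \<theta>) *v (W *v m \<theta>)"
  have "lam / 2 * norm (\<theta> - \<theta>\<^sub>0) * norm (\<theta> - \<theta>\<^sub>0) \<le> (\<theta> - \<theta>\<^sub>0) \<bullet> ?\<Psi>"
    using gmm_score_inner_lower_bound[OF W_sym m_zero m_deriv G_lip ident[unfolded lam_def] \<theta>]
    by (simp add: lam_def power2_eq_square mult.assoc)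
  also have "\<dots> \<le> norm ?\<Psi> * norm (\<theta> - \<theta>\<^sub>0)"
    by (metis Cauchy_Schwarz_ineq2 abs_ge_self mult.commute order.trans)
  finally show ?thesis
    using False by simp
qed simp

lemma norm_weighted_sum_diff_le:
  fixes x y :: "'i \<Rightarrow> 'a::real_normed_vector"
  assumes "\<And>k. k \<in> K \<Longrightarrow> 0 \<le> a k" "\<And>k. k \<in> K \<Longrightarrow> norm (x k - y k) \<le> b k"
  shows "norm ((\<Sum>k\<in>K. a k *\<^sub>R x k) - (\<Sum>k\<in>K. a k *\<^sub>R y k)) \<le> (\<Sum>k\<in>K. a k * b k)"
proof -
  have "norm ((\<Sum>k\<in>K. a k *\<^sub>R x k) - (\<Sum>k\<in>K. a k *\<^sub>R y k)) = norm (\<Sum>k\<in>K. a k *\<^sub>R (x k - y k))"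
    by (simp add: sum_subtractf scaleR_diff_right)
  also have "\<dots> \<le> (\<Sum>k\<in>K. norm (a k *\<^sub>R (x k - y k)))"
    by (rule norm_sum)
  also have "\<dots> = (\<Sum>k\<in>K. a k * norm (x k - y k))"
    using assms(1) by (intro sum.cong) auto
  also have "\<dots> \<le> (\<Sum>k\<in>K. a k * b k)"
    using assms by (intro sum_mono mult_left_mono) auto
  finally show ?thesis .
qed

theorem mainTheorem15:
  fixes Theta :: "(real^'p) set" and theta_star :: "real^'p"
    and L N :: nat and r0 LG eps zeta delta_opt :: real
    and m :: "real^'p \<Rightarrow> real^'q" and G :: "real^'p \<Rightarrow> real^'p^'q"
    and W :: "real^'q^'q"
    and a :: "nat \<Rightarrow> real" and C :: "nat \<Rightarrow> real" and delta_mu :: "nat \<Rightarrow> real \<Rightarrow> real"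
    and mu_g :: "nat \<Rightarrow> real^'p \<Rightarrow> real^'p"
    and M :: "'w measure" and E :: "'w set"
    and g_chk :: "nat \<Rightarrow> nat \<Rightarrow> real^'p \<Rightarrow> 'w \<Rightarrow> real^'p"
    and w_hat :: "nat \<Rightarrow> real^'p \<Rightarrow> 'w \<Rightarrow> nat \<Rightarrow> real"
    and theta_hat :: "'w \<Rightarrow> real^'p"
  defines "B0 \<equiv> cball theta_star r0"
    and "lam \<equiv> lambda_min (transpose (G theta_star) ** W ** G theta_star)"
    and "Psi \<equiv> (\<lambda>\<theta>. transpose (G \<theta>) *v (W *v m \<theta>))"
    and "alpha \<equiv> sqrt (eps / (1 - 2 * eps))"
    and "Psi_SGR \<equiv> (\<lambda>\<theta> \<omega>. \<Sum>k=1..L. a k *\<^sub>R (\<Sum>n=1..N. w_hat k \<theta> \<omega> n *\<^sub>R g_chk k n \<theta> \<omega>))"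
  assumes eps: "0 \<le> eps" "eps < 1/3"
    and zeta: "0 < zeta" "zeta < 1"
    and L: "L \<ge> 1"
    and theta_star: "theta_star \<in> Theta"
    and W_sym: "transpose W = W"
    and W_psd: "\<forall>x. 0 \<le> x \<bullet> (W *v x)"
    and r0: "r0 > 0" and B0_sub: "B0 \<subseteq> Theta"
    and m_zero: "m theta_star = 0"
    and m_deriv: "\<forall>\<theta>\<in>B0. (m has_derivative (\<lambda>h. G \<theta> *v h)) (at \<theta> within B0)"
    and G_cont: "continuous_on B0 G"
    and G_lip: "\<forall>\<theta>\<in>B0. \<forall>\<theta>'\<in>B0. opnorm (G \<theta> - G \<theta>') \<le> LG * norm (\<theta> - \<theta>')"
    and lam_pos: "lam > 0"
    and ident: "opnorm W * LG * r0 * (3/2 * opnorm (G theta_star) + 1/2 * LG * r0) \<le> lam / 2"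
    and a_nonneg: "\<forall>k\<in>{1..L}. a k \<ge> 0"
    and Psi_decomp: "\<forall>\<theta>\<in>B0. Psi \<theta> = (\<Sum>k=1..L. a k *\<^sub>R mu_g k \<theta>)"
    and w_simplex: "\<forall>k\<in>{1..L}. \<forall>\<theta> \<omega>. w_hat k \<theta> \<omega> \<in> capped_simplex N eps"
    and consts_nonneg: "\<forall>k\<in>{1..L}. delta_mu k zeta \<ge> 0 \<and> C k \<ge> 0" "delta_opt \<ge> 0"
    and M: "prob_space M"
    and E_ev: "E \<in> sets M"
    and E_prob: "measure M E \<ge> 1 - zeta"
    and E_i: "\<forall>\<omega>\<in>E. \<forall>k\<in>{1..L}. \<forall>\<theta>\<in>B0.
       norm ((\<Sum>n=1..N. w_hat k \<theta> \<omega> n *\<^sub>R g_chk k n \<theta> \<omega>) - mu_g k \<theta>)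
         \<le> delta_mu k zeta + alpha * sqrt (C k)"
    and E_ii: "\<forall>\<omega>\<in>E. theta_hat \<omega> \<in> Theta \<and> theta_hat \<omega> \<in> B0 \<and>
       norm (Psi_SGR (theta_hat \<omega>) \<omega>) \<le> delta_opt"
  shows "\<forall>\<omega>\<in>E. norm (theta_hat \<omega> - theta_star)
     \<le> 2 / lam * ((\<Sum>k=1..L. a k * (delta_mu k zeta + alpha * sqrt (C k))) + delta_opt)"
proof
  fix \<omega> assume "\<omega> \<in> E"
  define \<theta> where "\<theta> = theta_hat \<omega>"
  define R where "R = (\<Sum>k=1..L. a k * (delta_mu k zeta + alpha * sqrt (C k)))"
  from bspec[OF E_ii \<open>\<omega> \<in> E\<close>]
  have \<theta>: "\<theta> \<in> B0" and opt: "norm (Psi_SGR \<theta> \<omega>) \<le> delta_opt"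
    unfolding \<theta>_def by simp_all
  have "norm (Psi_SGR \<theta> \<omega> - Psi \<theta>) \<le> R"
    unfolding Psi_SGR_def Psi_decomp[rule_format, OF \<theta>] R_def
  proof (rule norm_weighted_sum_diff_le)
    fix k assume "k \<in> {1..L}"
    then show "0 \<le> a k" using a_nonneg by simp
    show "norm ((\<Sum>n=1..N. w_hat k \<theta> \<omega> n *\<^sub>R g_chk k n \<theta> \<omega>) - mu_g k \<theta>)
        \<le> delta_mu k zeta + alpha * sqrt (C k)"
      using bspec[OF bspec[OF bspec[OF E_i \<open>\<omega> \<in> E\<close>] \<open>k \<in> {1..L}\<close>] \<theta>] .
  qed
  with opt have "norm (Psi \<theta>) \<le> R + delta_opt"
    using norm_triangle_ineq4[of "Psi_SGR \<theta> \<omega>" "Psi_SGR \<theta> \<omega> - Psi \<theta>"] by simp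
  moreover have "lam / 2 * norm (\<theta> - theta_star) \<le> norm (Psi \<theta>)"
    unfolding lam_def Psi_def
    by (rule gmm_score_coercive[where m = m and \<theta>\<^sub>0 = theta_star, OF W_sym m_zero
          m_deriv[unfolded B0_def, rule_format] G_lip[unfolded B0_def, rule_format]
          ident[unfolded lam_def] \<theta>[unfolded B0_def]])
  ultimately show "norm (theta_hat \<omega> - theta_star) \<le> 2 / lam * (R + delta_opt)"
    using lam_pos by (simp add: \<theta>_def field_simps)
qed

end
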